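(* Let $A\in\mathbb{R}^{n\times n}$ be Metzler and Hurwitz stable, let $b_0\in\mathbb{R}^n_{\ge0}$, let $\mu,\theta,\eta,k_i,k_p>0$, and set $r:=\mu/\theta$, $g_1:=-e_n^TA^{-1}e_1$, $g_n:=-e_n^TA^{-1}e_n$, $g_0:=-e_n^TA^{-1}b_0$. Assume $g_1\neq0$. Consider the closed-loop system $$\dot x=Ax+k_iz_1e_1-k_px_nz_2e_n+b_0,\qquad \dot z_1=\mu-\eta z_1z_2,\qquad \dot z_2=\theta x_n-\eta z_1z_2,$$ with $x\in\mathbb{R}^n$, $z_1,z_2\in\mathbb{R}$. Then the polynomial $$P_1(z):=\eta g_1k_iz^2+(g_0-r)\eta z-g_nk_p\mu r$$ has exactly one positive root $z_1^*$, and the system has exactly one equilibrium $(x^*,z_1^*,z_2^* )$ with $z_1^*>0$; it is given by $x^*_n=r$, $$z_2^*=\frac{\mu}{\eta z_1^*},\qquad x^*=-A^{-1}\Big(k_iz_1^*e_1-\frac{k_p r\mu}{\eta z_1^*}e_n+b_0\Big).$$ Equivalently, $z_1^*=\mu/(\eta z_2^* )$ where $z_2^*$ is the unique positive root of $P_2(z):=-\eta g_nk_prz^2+(g_0-r)\eta z+g_1k_i\mu$.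
   Context: $e_1,\dots,e_n$ is the standard basis of $\mathbb{R}^n$ and $x_n=e_n^Tx$. A real square matrix is Metzler if all its off-diagonal entries are nonnegative, and Hurwitz stable if all its eigenvalues have negative real part. *)

theory Defs
  imports "HOL-Analysis.Analysis"
begin

text \<open>Indices of R^n are a finite well-ordered type; e_1 is the first, e_n the last basis vector.\<close>

definition first_idx :: "'n::{finite,wellorder}" where
  "first_idx = (LEAST i. True)"

definition last_idx :: "'n::{finite,wellorder}" where
  "last_idx = (GREATEST i. True)"

definition metzler :: "real^'n^'n \<Rightarrow> bool" where
  "metzler A \<longleftrightarrow> (\<forall>i j. i \<noteq> j \<longrightarrow> A $ i $ j \<ge> 0)"

definition cmat :: "real^'n^'m \<Rightarrow> complex^'n^'m" where
  "cmat A = (\<chi> i j. complex_of_real (A $ i $ j))"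

definition is_eigenvalue :: "real^'n^'n \<Rightarrow> complex \<Rightarrow> bool" where
  "is_eigenvalue A c \<longleftrightarrow> (\<exists>v. v \<noteq> 0 \<and> cmat A *v v = c *s v)"

definition hurwitz :: "real^'n^'n \<Rightarrow> bool" where
  "hurwitz A \<longleftrightarrow> (\<forall>c. is_eigenvalue A c \<longrightarrow> Re c < 0)"

end

theory Submission
  imports Defs
begin

(* For a Metzler Hurwitz matrix A the matrix -A^-1 is entrywise nonnegative with positive
   diagonal, so g1 > 0 (as g1 \<noteq> 0) and gn > 0. At an equilibrium with z1 > 0 the two
   z-equations force x_n = r and z2 = \<mu>/(\<eta> z1); the x-equation then determines x, and the
   consistency condition x_n = r becomes P1(z1) = 0. P1 has positive leading and negative
   constant coefficient, hence exactly one positive root, and P2 is P1 rewritten in the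
   variable \<mu>/(\<eta> z) up to a positive factor.
   Inverse positivity follows from a positive vector v with A v < 0, found by a continuation
   argument along the shifts A - t I, t \<ge> 0, which stay invertible by Hurwitz stability: such
   a vector exists for large t, and the set of admissible t is open and closed in [0, \<infinity>). *)

lemma shift_mult_vec:
  "((A::real^'n^'n) - t *\<^sub>R mat 1) *v v = A *v v - t *\<^sub>R v"
  by (simp add: matrix_vector_mult_diff_rdistrib flip: scaleR_matrix_vector_assoc)

lemma matrix_vector_mult_uminus_right: "(A::real^'n^'m) *v (- x) = - (A *v x)"
  by (simp add: vec_eq_iff matrix_vector_mult_def sum_negf)

lemma inner_axis_left: "axis k (1::real) \<bullet> y = y $ k"
  by (simp add: cart_eq_inner_axis inner_commute)

lemma matrix_inv_mult_vec_right: "invertible A \<Longrightarrow> A *v (matrix_inv A *v y) = y"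
  and matrix_inv_mult_vec_left: "invertible A \<Longrightarrow> matrix_inv A *v (A *v y) = y"
  for A :: "real^'n^'n"
  unfolding invertible_def matrix_inv_def
  by (metis (mono_tags, lifting) someI_ex matrix_vector_mul_assoc matrix_vector_mul_lid)+

lemma invertible_mult_vec_add_eq_0_iff:
  fixes A :: "real^'n^'n"
  assumes "invertible A"
  shows "A *v x + w = 0 \<longleftrightarrow> x = - (matrix_inv A *v w)"
proof
  assume "A *v x + w = 0"
  then have "A *v x = - w"
    by (simp add: eq_neg_iff_add_eq_0)
  then have "matrix_inv A *v (A *v x) = matrix_inv A *v (- w)"
    by simp
  then show "x = - (matrix_inv A *v w)"
    by (simp add: matrix_inv_mult_vec_left[OF assms] matrix_vector_mult_uminus_right)
next
  assume "x = - (matrix_inv A *v w)"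
  then show "A *v x + w = 0"
    by (simp add: matrix_inv_mult_vec_right[OF assms] matrix_vector_mult_uminus_right)
qed

lemma continuous_on_det:
  fixes M :: "'a::topological_space \<Rightarrow> real^'n^'n"
  assumes "\<And>i j. continuous_on S (\<lambda>t. M t $ i $ j)"
  shows "continuous_on S (\<lambda>t. det (M t))"
  unfolding det_def by (intro continuous_intros assms)

lemma continuous_on_cramer_solution:
  fixes M :: "'a::topological_space \<Rightarrow> real^'n^'n"
  assumes cont: "\<And>i j. continuous_on S (\<lambda>t. M t $ i $ j)"
    and det: "\<And>t. t \<in> S \<Longrightarrow> det (M t) \<noteq> 0"
  obtains u where "\<And>k. continuous_on S (\<lambda>t. u t $ k)" and "\<And>t. t \<in> S \<Longrightarrow> M t *v u t = y"
proof
  define N where "N k t = (\<chi> i j. if j = k then y $ i else M t $ i $ j)" for k t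
  show "M t *v (\<chi> k. det (N k t) / det (M t)) = y" if "t \<in> S" for t
    using cramer[OF det[OF that]] by (simp add: N_def)
  have "continuous_on S (\<lambda>t. N k t $ i $ j)" for k i j
    by (cases "j = k") (simp_all add: N_def cont)
  then have num: "continuous_on S (\<lambda>t. det (N k t))" for k
    by (rule continuous_on_det)
  show "continuous_on S (\<lambda>t. (\<chi> k. det (N k t) / det (M t)) $ k)" for k
    unfolding vec_lambda_beta using det
    by (intro continuous_on_divide num continuous_on_det cont) auto
qed

section \<open>Inverse positivity of Metzler Hurwitz matrices\<close>

lemma metzler_shift: "metzler A \<Longrightarrow> metzler (A - t *\<^sub>R mat 1)"
  by (simp add: metzler_def mat_def)

(* Scale v down until it touches x from below at some index i; there the Metzler sign
   pattern gives (M x)_i \<ge> m (M v)_i > 0. *)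
lemma metzler_nonneg_if_mult_nonpos:
  fixes M :: "real^'n^'n"
  assumes "metzler M" and v: "\<forall>i. 0 < v $ i" "\<forall>i. (M *v v) $ i < 0"
    and x: "\<forall>i. (M *v x) $ i \<le> 0"
  shows "0 \<le> x $ k"
proof (rule ccontr)
  assume "\<not> 0 \<le> x $ k"
  define m where "m = Min (range (\<lambda>j. x $ j / v $ j))"
  have "m \<in> range (\<lambda>j. x $ j / v $ j)"
    unfolding m_def by (rule Min_in) auto
  then obtain i where i: "m = x $ i / v $ i"
    by blast
  have below: "m * v $ j \<le> x $ j" for j
  proof -
    have "m \<le> x $ j / v $ j"
      by (simp add: m_def)
    then show ?thesis
      using v(1) by (simp add: pos_le_divide_eq)
  qed
  have "m \<le> x $ k / v $ k"
    by (simp add: m_def)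
  also have "\<dots> < 0"
    using \<open>\<not> 0 \<le> x $ k\<close> v(1) by (simp add: divide_neg_pos)
  finally have "m < 0" .
  have touch: "x $ i = m * v $ i"
    using i v(1) by (simp add: order_less_imp_not_eq2)
  have "m * (M *v v) $ i = (\<Sum>j\<in>UNIV. M $ i $ j * (m * v $ j))"
    by (simp add: matrix_vector_mult_def sum_distrib_left mult_ac)
  also have "\<dots> \<le> (\<Sum>j\<in>UNIV. M $ i $ j * x $ j)"
  proof (intro sum_mono)
    fix j
    show "M $ i $ j * (m * v $ j) \<le> M $ i $ j * x $ j"
      using below[of j] \<open>metzler M\<close> touch
      by (cases "i = j") (auto simp: metzler_def intro: mult_left_mono)
  qed
  also have "\<dots> = (M *v x) $ i"
    by (simp add: matrix_vector_mult_def)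
  finally have "m * (M *v v) $ i \<le> (M *v x) $ i" .
  moreover have "0 < m * (M *v v) $ i"
    using \<open>m < 0\<close> v(2) by (simp add: mult_neg_neg)
  ultimately show False
    using x by (meson not_le order_less_le_trans)
qed

lemma metzler_pos_component:
  fixes M :: "real^'n^'n"
  assumes "metzler M" and x: "\<forall>j. 0 \<le> x $ j" and "(M *v x) $ i < 0"
  shows "0 < x $ i"
proof (rule ccontr)
  assume "\<not> 0 < x $ i"
  with x have "x $ i = 0"
    by (simp add: order.antisym not_less)
  have "0 \<le> M $ i $ j * x $ j" for j
    using \<open>metzler M\<close> x \<open>x $ i = 0\<close> by (cases "i = j") (auto simp: metzler_def)
  then have "0 \<le> (\<Sum>j\<in>UNIV. M $ i $ j * x $ j)"
    by (rule sum_nonneg)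
  with \<open>(M *v x) $ i < 0\<close> show False
    by (simp add: matrix_vector_mult_def)
qed

lemma hurwitz_real_eigenvector:
  assumes "hurwitz A" and "A *v x = t *\<^sub>R x" and "x \<noteq> 0"
  shows "t < 0"
proof -
  define cx where "cx = (\<chi> i. complex_of_real (x $ i))"
  have "cx \<noteq> 0"
    using \<open>x \<noteq> 0\<close> by (auto simp: cx_def vec_eq_iff)
  moreover have "cmat A *v cx = complex_of_real t *s cx"
  proof -
    have "(cmat A *v cx) $ i = complex_of_real ((A *v x) $ i)" for i
      by (simp add: cmat_def cx_def matrix_vector_mult_def)
    then show ?thesis
      using assms(2) by (simp add: vec_eq_iff cx_def)
  qed
  ultimately have "is_eigenvalue A (complex_of_real t)"
    unfolding is_eigenvalue_def by blast
  with \<open>hurwitz A\<close> show ?thesis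
    unfolding hurwitz_def by fastforce
qed

lemma hurwitz_det_shift_neq_0:
  assumes "hurwitz A" and "0 \<le> t"
  shows "det (A - t *\<^sub>R mat 1) \<noteq> 0"
proof -
  have "x = 0" if "(A - t *\<^sub>R mat 1) *v x = 0" for x
    using hurwitz_real_eigenvector[OF \<open>hurwitz A\<close>, of x t] that \<open>0 \<le> t\<close>
    by (force simp: shift_mult_vec)
  then show ?thesis
    by (simp add: invertible_det_nz[symmetric] invertible_left_inverse matrix_left_invertible_ker)
qed

lemma hurwitz_invertible: "hurwitz A \<Longrightarrow> invertible A"
  using hurwitz_det_shift_neq_0[of A 0] by (simp add: invertible_det_nz)

definition has_decay_vector :: "real^'n^'n \<Rightarrow> bool" where
  "has_decay_vector M \<longleftrightarrow> (\<exists>v. (\<forall>i. 0 < v $ i) \<and> (\<forall>i. (M *v v) $ i < 0))"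

lemma has_decay_vector_shift_mono:
  assumes "has_decay_vector (A - t *\<^sub>R mat 1)" and "t \<le> s"
  shows "has_decay_vector (A - s *\<^sub>R mat 1)"
proof -
  obtain v where v: "\<forall>i. 0 < v $ i" "\<forall>i. (A *v v) $ i - t * v $ i < 0"
    using assms(1) by (auto simp: has_decay_vector_def shift_mult_vec)
  have "(A *v v) $ i - s * v $ i < 0" for i
    using v(2)[rule_format, of i] mult_right_mono[OF \<open>t \<le> s\<close> less_imp_le[OF v(1)[rule_format, of i]]]
    by linarith
  with v(1) show ?thesis
    unfolding has_decay_vector_def shift_mult_vec by auto
qed

lemma has_decay_vector_shift_large: "\<exists>t\<ge>0. has_decay_vector (A - t *\<^sub>R mat 1)"
proof (intro exI conjI)
  define t where "t = 1 + (\<Sum>i\<in>UNIV. \<Sum>j\<in>UNIV. \<bar>A $ i $ j\<bar>)"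
  show "0 \<le> t"
    by (simp add: t_def sum_nonneg)
  have "(A *v (\<chi> i. 1)) $ i < t" for i
  proof -
    have "(A *v (\<chi> i. 1)) $ i \<le> (\<Sum>j\<in>UNIV. \<bar>A $ i $ j\<bar>)"
      by (simp add: matrix_vector_mult_def sum_mono)
    also have "\<dots> \<le> (\<Sum>i\<in>UNIV. \<Sum>j\<in>UNIV. \<bar>A $ i $ j\<bar>)"
      by (rule member_le_sum) (auto simp: sum_nonneg)
    finally show ?thesis
      by (simp add: t_def)
  qed
  then show "has_decay_vector (A - t *\<^sub>R mat 1)"
    unfolding has_decay_vector_def shift_mult_vec by (intro exI[of _ "\<chi> i. 1"]) simp
qed

lemma has_decay_vector_shift_open:
  assumes "has_decay_vector (A - t *\<^sub>R mat 1)"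
  shows "\<exists>d>0. \<forall>s>t - d. has_decay_vector (A - s *\<^sub>R mat 1)"
proof -
  obtain v where v: "\<forall>i. 0 < v $ i" and neg: "\<forall>i. (A *v v) $ i - t * v $ i < 0"
    using assms by (auto simp: has_decay_vector_def shift_mult_vec)
  define d where "d = Min (range (\<lambda>i. (t * v $ i - (A *v v) $ i) / v $ i))"
  have "0 < d"
    unfolding d_def using v neg by (subst Min_gr_iff) auto
  moreover have "has_decay_vector (A - s *\<^sub>R mat 1)" if "t - d < s" for s
    unfolding has_decay_vector_def shift_mult_vec
  proof (intro exI[of _ v] conjI allI)
    fix i
    show "0 < v $ i"
      using v by simp
    have "d \<le> (t * v $ i - (A *v v) $ i) / v $ i"
      by (simp add: d_def)
    then have "d * v $ i \<le> t * v $ i - (A *v v) $ i"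
      using v by (simp add: pos_le_divide_eq)
    moreover have "(t - s) * v $ i < d * v $ i"
      using that v by (simp add: mult_strict_right_mono)
    ultimately show "(A *v v - s *\<^sub>R v) $ i < 0"
      by (simp add: algebra_simps)
  qed
  ultimately show ?thesis
    by blast
qed

(* The solutions of (A - t I) u = -1 are nonnegative for t > T and depend continuously on t;
   their limit at T is then strictly positive. *)
lemma has_decay_vector_shift_at_infimum:
  assumes "metzler A" and "hurwitz A" and "0 \<le> T"
    and above_T: "\<And>t. T < t \<Longrightarrow> has_decay_vector (A - t *\<^sub>R mat 1)"
  shows "has_decay_vector (A - T *\<^sub>R mat 1)"
proof -
  obtain u where u_cont: "\<And>k. continuous_on {0..} (\<lambda>t. u t $ k)"
    and u_sol: "\<And>t. t \<in> {0..} \<Longrightarrow> (A - t *\<^sub>R mat 1) *v u t = (\<chi> i. -1)"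
    by (rule continuous_on_cramer_solution[of "{0..}" "\<lambda>t. A - t *\<^sub>R mat 1"])
      (auto intro!: continuous_on_diff continuous_on_mult continuous_on_id
        hurwitz_det_shift_neq_0[OF \<open>hurwitz A\<close>])
  have "0 \<le> u T $ k" for k
  proof (rule tendsto_lowerbound)
    show "((\<lambda>t. u t $ k) \<longlongrightarrow> u T $ k) (at_right T)"
      using u_cont[of k] \<open>0 \<le> T\<close>
      by (auto simp: continuous_on_def intro: tendsto_within_subset)
    have nonneg_right: "0 \<le> u t $ k" if "T < t" for t
    proof -
      obtain v where "\<forall>i. 0 < v $ i" "\<forall>i. ((A - t *\<^sub>R mat 1) *v v) $ i < 0"
        using above_T[OF \<open>T < t\<close>] by (auto simp: has_decay_vector_def)
      moreover have "(A - t *\<^sub>R mat 1) *v u t = (\<chi> i. -1)"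
        using u_sol \<open>0 \<le> T\<close> \<open>T < t\<close> by simp
      ultimately show ?thesis
        by (intro metzler_nonneg_if_mult_nonpos[OF metzler_shift[OF \<open>metzler A\<close>]]) auto
    qed
    show "\<forall>\<^sub>F t in at_right T. 0 \<le> u t $ k"
      by (rule eventually_mono[OF eventually_at_right_less nonneg_right])
  qed simp
  moreover have sol_T: "(A - T *\<^sub>R mat 1) *v u T = (\<chi> i. -1)"
    using u_sol \<open>0 \<le> T\<close> by simp
  ultimately have "0 < u T $ k" for k
    by (intro metzler_pos_component[OF metzler_shift[OF \<open>metzler A\<close>, of T]]) auto
  then show ?thesis
    unfolding has_decay_vector_def using sol_T by (intro exI[of _ "u T"]) simp
qed

lemma metzler_hurwitz_has_decay_vector:
  assumes "metzler A" and "hurwitz A"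
  shows "has_decay_vector A"
proof -
  define S where "S = {t. 0 \<le> t \<and> has_decay_vector (A - t *\<^sub>R mat 1)}"
  define T where "T = Inf S"
  have "S \<noteq> {}"
    using has_decay_vector_shift_large[of A] by (auto simp: S_def)
  have "bdd_below S"
    by (rule bdd_belowI[of _ 0]) (simp add: S_def)
  have "0 \<le> T"
    unfolding T_def using \<open>S \<noteq> {}\<close> by (rule cInf_greatest) (simp add: S_def)
  have "has_decay_vector (A - t *\<^sub>R mat 1)" if "T < t" for t
  proof -
    obtain s where "s \<in> S" "s < t"
      using cInf_less_iff[OF \<open>S \<noteq> {}\<close> \<open>bdd_below S\<close>] \<open>T < t\<close> by (auto simp: T_def)
    then show ?thesis
      using has_decay_vector_shift_mono[of A s t] by (simp add: S_def)
  qed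
  then have decay_T: "has_decay_vector (A - T *\<^sub>R mat 1)"
    using has_decay_vector_shift_at_infimum[OF assms \<open>0 \<le> T\<close>] by blast
  then obtain d where "0 < d" and near_T: "\<forall>s>T - d. has_decay_vector (A - s *\<^sub>R mat 1)"
    using has_decay_vector_shift_open by blast
  have "T = 0"
  proof (rule ccontr)
    assume "T \<noteq> 0"
    then have "max 0 (T - d / 2) < T"
      using \<open>0 \<le> T\<close> \<open>0 < d\<close> by simp
    moreover have "max 0 (T - d / 2) \<in> S"
      using near_T \<open>0 < d\<close> by (simp add: S_def)
    ultimately show False
      using cInf_lower[OF _ \<open>bdd_below S\<close>] by (force simp: T_def)
  qed
  with decay_T show ?thesis
    by simp
qed

lemma metzler_hurwitz_nonneg_if_mult_nonpos:
  assumes "metzler A" and "hurwitz A" and "\<forall>i. (A *v x) $ i \<le> 0"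
  shows "0 \<le> x $ k"
  using metzler_hurwitz_has_decay_vector[OF assms(1,2)] metzler_nonneg_if_mult_nonpos[OF assms(1) _ _ assms(3)]
  by (auto simp: has_decay_vector_def)

lemma metzler_hurwitz_inverse_nonpos:
  assumes "metzler A" and "hurwitz A" and "\<forall>i. 0 \<le> y $ i"
  shows "(matrix_inv A *v y) $ k \<le> 0"
proof -
  have "\<forall>i. (A *v - (matrix_inv A *v y)) $ i \<le> 0"
    using assms(3) matrix_inv_mult_vec_right[OF hurwitz_invertible[OF assms(2)]]
    by (simp add: matrix_vector_mult_uminus_right)
  then show ?thesis
    using metzler_hurwitz_nonneg_if_mult_nonpos[OF assms(1,2)] by fastforce
qed

lemma metzler_hurwitz_inverse_diag_neg:
  assumes "metzler A" and "hurwitz A"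
  shows "(matrix_inv A *v axis k 1) $ k < 0"
proof -
  define x where "x = - (matrix_inv A *v axis k 1)"
  have "\<forall>j. 0 \<le> x $ j"
    using metzler_hurwitz_inverse_nonpos[OF assms] by (simp add: x_def axis_def)
  moreover have "A *v x = - axis k 1"
    using matrix_inv_mult_vec_right[OF hurwitz_invertible[OF assms(2)]]
    by (simp add: x_def matrix_vector_mult_uminus_right)
  ultimately have "0 < x $ k"
    using metzler_pos_component[OF assms(1)] by (simp add: axis_def)
  then show ?thesis
    by (simp add: x_def)
qed

section \<open>Equilibria of the closed loop\<close>

lemma quadratic_unique_pos_root:
  fixes a b c :: real
  assumes "0 < a" and "c < 0"
  shows "\<exists>!z. 0 < z \<and> a * z^2 + b * z + c = 0"
proof
  define D where "D = b^2 - 4 * a * c"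
  have "b^2 < D"
    using assms by (simp add: D_def mult_pos_neg)
  then have "\<bar>b\<bar> < sqrt D"
    by (metis real_sqrt_abs real_sqrt_less_mono)
  define z where "z = (- b + sqrt D) / (2 * a)"
  have "0 < z"
    using \<open>\<bar>b\<bar> < sqrt D\<close> \<open>0 < a\<close> by (simp add: z_def)
  moreover have "0 \<le> D"
    using \<open>b^2 < D\<close> zero_le_power2[of b] by linarith
  then have "(sqrt D)^2 = D"
    by simp
  then have "a * z^2 + b * z + c = 0"
    using \<open>0 < a\<close> by (simp add: z_def D_def field_simps power2_eq_square)
  ultimately show "0 < z \<and> a * z^2 + b * z + c = 0"
    by simp
  fix w
  assume w: "0 < w \<and> a * w^2 + b * w + c = 0"
  have "(2 * a * w + b)^2 = 4 * a * (a * w^2 + b * w + c) + D"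
    by (simp add: D_def power2_eq_square algebra_simps)
  then have "(2 * a * w + b)^2 = D"
    using w by simp
  moreover have "0 < 2 * a * w + b"
  proof -
    have "0 < w * (a * w + b)"
      using w \<open>c < 0\<close> by (simp add: algebra_simps power2_eq_square)
    then have "0 < a * w + b"
      using w zero_less_mult_pos by blast
    moreover have "0 < a * w"
      using \<open>0 < a\<close> w by simp
    ultimately show ?thesis
      by linarith
  qed
  ultimately have "sqrt D = 2 * a * w + b"
    by (metis less_imp_le real_sqrt_unique)
  then show "w = z"
    using \<open>0 < a\<close> by (simp add: z_def field_simps)
qed

lemma closed_loop_output_at_setpoint:
  fixes \<mu> \<theta> :: real
  assumes "0 < \<theta>" and "\<mu> - \<eta> * z1 * z2 = 0" and "\<theta> * y - \<eta> * z1 * z2 = 0"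
  shows "y = \<mu> / \<theta>"
  using assms by (simp add: eq_divide_eq mult.commute)

lemma closed_loop_equilibrium_iff:
  fixes A :: "real^'n^'n" and b x :: "real^'n"
  assumes "invertible A" and "0 < \<theta>" "0 < \<eta>" "0 < z1" and r: "r = \<mu> / \<theta>"
    and g1: "g1 = - (axis q 1 \<bullet> (matrix_inv A *v axis p 1))"
    and gn: "gn = - (axis q 1 \<bullet> (matrix_inv A *v axis q 1))"
    and g0: "g0 = - (axis q 1 \<bullet> (matrix_inv A *v b))"
  shows "(A *v x + (ki * z1) *\<^sub>R axis p 1 - (kp * x $ q * z2) *\<^sub>R axis q 1 + b = 0
            \<and> \<mu> - \<eta> * z1 * z2 = 0 \<and> \<theta> * x $ q - \<eta> * z1 * z2 = 0)
    \<longleftrightarrow> \<eta> * g1 * ki * z1^2 + (g0 - r) * \<eta> * z1 - gn * kp * \<mu> * r = 0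
        \<and> z2 = \<mu> / (\<eta> * z1)
        \<and> x = - (matrix_inv A *v ((ki * z1) *\<^sub>R axis p 1 - (kp * r * \<mu> / (\<eta> * z1)) *\<^sub>R axis q 1 + b))"
    (is "?equations \<longleftrightarrow> ?P1 \<and> ?z2 \<and> x = - (matrix_inv A *v ?w)")
proof -
  have "\<eta> * z1 \<noteq> 0"
    using assms by simp
  note solve_for_x = invertible_mult_vec_add_eq_0_iff[OF \<open>invertible A\<close>, of x ?w]
  have output_eq: "(- (matrix_inv A *v ?w)) $ q = ki * z1 * g1 - kp * r * \<mu> / (\<eta> * z1) * gn + g0"
    by (simp add: g1 gn g0 inner_axis_left algebra_simps)
  have P1_eq: "\<eta> * g1 * ki * z1^2 + (g0 - r) * \<eta> * z1 - gn * kp * \<mu> * r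
      = \<eta> * z1 * (ki * z1 * g1 - kp * r * \<mu> / (\<eta> * z1) * gn + g0 - r)"
    using \<open>\<eta> * z1 \<noteq> 0\<close> by (simp add: field_simps power2_eq_square)
  have "?equations \<longleftrightarrow> A *v x + ?w = 0 \<and> x $ q = r \<and> ?z2" if "x $ q = r \<and> ?z2"
    using that assms by (auto simp: algebra_simps)
  moreover have "x $ q = r \<and> ?z2" if ?equations
    using that closed_loop_output_at_setpoint[OF \<open>0 < \<theta>\<close>] \<open>\<eta> * z1 \<noteq> 0\<close> r
    by (auto simp: field_simps)
  moreover have "x $ q = r \<longleftrightarrow> ?P1" if "x = - (matrix_inv A *v ?w)"
    using that output_eq P1_eq \<open>\<eta> * z1 \<noteq> 0\<close> by auto
  ultimately show ?thesis
    using solve_for_x by blast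
qed

lemma reciprocal_pos_root:
  fixes \<mu> \<eta> z :: real
  assumes "0 < \<mu>" "0 < \<eta>" "0 < z"
    and "\<eta> * g1 * ki * z^2 + (g0 - r) * \<eta> * z - gn * kp * \<mu> * r = 0"
  shows "- \<eta> * gn * kp * r * (\<mu> / (\<eta> * z))^2 + (g0 - r) * \<eta> * (\<mu> / (\<eta> * z)) + g1 * ki * \<mu> = 0"
proof -
  have "\<eta> * g1 * ki * z^2 + (g0 - r) * \<eta> * z - gn * kp * \<mu> * r
      = \<eta> * z^2 / \<mu> * (- \<eta> * gn * kp * r * (\<mu> / (\<eta> * z))^2
          + (g0 - r) * \<eta> * (\<mu> / (\<eta> * z)) + g1 * ki * \<mu>)"
    using assms(1-3) by (simp add: field_simps power2_eq_square)
  with assms show ?thesis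
    by simp
qed

lemma ex1_pos_triple_if_parametrized:
  assumes "\<exists>!z. 0 < z \<and> P z"
    and "\<And>x z1 z2. E x z1 z2 \<and> 0 < z1 \<longleftrightarrow> 0 < z1 \<and> P z1 \<and> z2 = f z1 \<and> x = g z1"
  shows "\<exists>!p. case p of (x, z1, z2) \<Rightarrow> E x z1 z2 \<and> 0 < z1"
proof -
  obtain z where z: "0 < z" "P z" and z_unique: "\<And>w. 0 < w \<Longrightarrow> P w \<Longrightarrow> w = z"
    using assms(1) by blast
  show ?thesis
  proof (rule ex1I)
    show "case (g z, z, f z) of (x, z1, z2) \<Rightarrow> E x z1 z2 \<and> 0 < z1"
      using assms(2) z by simp
    fix p
    assume "case p of (x, z1, z2) \<Rightarrow> E x z1 z2 \<and> 0 < z1"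
    then obtain x z1 z2 where p: "p = (x, z1, z2)" and "E x z1 z2 \<and> 0 < z1"
      by (cases p) auto
    then have "0 < z1" "P z1" "z2 = f z1" "x = g z1"
      using assms(2) by simp_all
    then show "p = (g z, z, f z)"
      using z_unique p by simp
  qed
qed

lemma closed_loop_unique_equilibrium:
  fixes A :: "real^'n^'n" and b0 :: "real^'n" and p q :: 'n
    and \<mu> \<theta> \<eta> ki kp r g1 gn g0 :: real
    and P1 P2 :: "real \<Rightarrow> real" and equil :: "real^'n \<Rightarrow> real \<Rightarrow> real \<Rightarrow> bool"
  assumes "invertible A"
    and pos: "0 < \<mu>" "0 < \<theta>" "0 < \<eta>" "0 < ki" "0 < kp"
    and r: "r = \<mu> / \<theta>"
    and g1: "g1 = - (axis q 1 \<bullet> (matrix_inv A *v axis p 1))" "0 < g1"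
    and gn: "gn = - (axis q 1 \<bullet> (matrix_inv A *v axis q 1))" "0 < gn"
    and g0: "g0 = - (axis q 1 \<bullet> (matrix_inv A *v b0))"
    and P1: "\<And>z. P1 z = \<eta> * g1 * ki * z^2 + (g0 - r) * \<eta> * z - gn * kp * \<mu> * r"
    and P2: "\<And>z. P2 z = - \<eta> * gn * kp * r * z^2 + (g0 - r) * \<eta> * z + g1 * ki * \<mu>"
    and equil: "\<And>x z1 z2. equil x z1 z2 \<longleftrightarrow>
           (A *v x + (ki * z1) *\<^sub>R axis p 1 - (kp * x $ q * z2) *\<^sub>R axis q 1 + b0 = 0
            \<and> \<mu> - \<eta> * z1 * z2 = 0
            \<and> \<theta> * x $ q - \<eta> * z1 * z2 = 0)"
  shows "(\<exists>!z. z > 0 \<and> P1 z = 0)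
    \<and> (\<exists>!p. case p of (x, z1, z2) \<Rightarrow> equil x z1 z2 \<and> z1 > 0)
    \<and> (\<forall>x z1 z2. equil x z1 z2 \<and> z1 > 0 \<longrightarrow>
          P1 z1 = 0 \<and> x $ q = r \<and> z2 = \<mu> / (\<eta> * z1)
          \<and> x = - (matrix_inv A *v ((ki * z1) *\<^sub>R axis p 1
                   - (kp * r * \<mu> / (\<eta> * z1)) *\<^sub>R axis q 1 + b0)))
    \<and> (\<exists>!z. z > 0 \<and> P2 z = 0)
    \<and> (\<forall>x z1 z2. equil x z1 z2 \<and> z1 > 0 \<longrightarrow>
          z2 > 0 \<and> P2 z2 = 0 \<and> z1 = \<mu> / (\<eta> * z2))"
proof -
  have "0 < r"
    using pos r by simp
  have P1_root: "\<exists>!z. 0 < z \<and> P1 z = 0"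
    using quadratic_unique_pos_root[of "\<eta> * g1 * ki" "- (gn * kp * \<mu> * r)" "(g0 - r) * \<eta>"]
      \<open>0 < g1\<close> \<open>0 < gn\<close> \<open>0 < r\<close> pos by (simp add: P1 mult_ac)
  have "P2 z = - (\<eta> * gn * kp * r * z^2 + (- (g0 - r) * \<eta>) * z + - (g1 * ki * \<mu>))" for z
    by (simp add: P2 algebra_simps)
  then have P2_root: "\<exists>!z. 0 < z \<and> P2 z = 0"
    using quadratic_unique_pos_root[of "\<eta> * gn * kp * r" "- (g1 * ki * \<mu>)" "- (g0 - r) * \<eta>"]
      \<open>0 < g1\<close> \<open>0 < gn\<close> \<open>0 < r\<close> pos by (simp add: eq_commute[of "g1 * ki * \<mu>"])
  define steady_state where "steady_state z1 = - (matrix_inv A *v ((ki * z1) *\<^sub>R axis p 1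
      - (kp * r * \<mu> / (\<eta> * z1)) *\<^sub>R axis q 1 + b0))" for z1
  have characterization: "equil x z1 z2 \<and> 0 < z1
      \<longleftrightarrow> 0 < z1 \<and> P1 z1 = 0 \<and> z2 = \<mu> / (\<eta> * z1) \<and> x = steady_state z1" for x z1 z2
  proof (cases "0 < z1")
    case True
    show ?thesis
      unfolding equil P1 steady_state_def
      using closed_loop_equilibrium_iff[OF \<open>invertible A\<close> pos(2,3) True r g1(1) gn(1) g0] True
      by (simp only: simp_thms)
  qed simp
  have output_at_setpoint: "x $ q = r" if "equil x z1 z2" for x z1 z2
    using that closed_loop_output_at_setpoint[OF pos(2)] r by (simp add: equil)
  have reciprocal_root: "0 < z2 \<and> P2 z2 = 0 \<and> z1 = \<mu> / (\<eta> * z2)"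
    if "equil x z1 z2" "0 < z1" for x z1 z2
  proof -
    have "P1 z1 = 0" and z2: "z2 = \<mu> / (\<eta> * z1)"
      using characterization[of x z1 z2] that by auto
    then have "P2 z2 = 0"
      using reciprocal_pos_root[OF pos(1,3) \<open>0 < z1\<close>] by (simp add: P1 P2)
    with z2 pos \<open>0 < z1\<close> show ?thesis
      by simp
  qed
  have "P1 z1 = 0 \<and> x $ q = r \<and> z2 = \<mu> / (\<eta> * z1) \<and> x = steady_state z1"
    if "equil x z1 z2 \<and> 0 < z1" for x z1 z2
    using that characterization[of x z1 z2] output_at_setpoint by auto
  with P1_root P2_root reciprocal_root
    ex1_pos_triple_if_parametrized[OF P1_root characterization]
  show ?thesis
    unfolding steady_state_def by blast
qed

theorem mainTheorem1:
  fixes A :: "real^('n::{finite,wellorder})^('n::{finite,wellorder})"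
    and b0 :: "real^('n::{finite,wellorder})"
    and \<mu> \<theta> \<eta> ki kp r g1 gn g0 :: real
    and P1 P2 :: "real \<Rightarrow> real"
    and equil :: "real^('n::{finite,wellorder}) \<Rightarrow> real \<Rightarrow> real \<Rightarrow> bool"
  assumes "metzler A" and "hurwitz A"
    and "\<forall>i. b0 $ i \<ge> 0"
    and "\<mu> > 0" "\<theta> > 0" "\<eta> > 0" "ki > 0" "kp > 0"
    and "r = \<mu> / \<theta>"
    and "g1 = - (axis last_idx 1 \<bullet> (matrix_inv A *v axis first_idx 1))"
    and "gn = - (axis last_idx 1 \<bullet> (matrix_inv A *v axis last_idx 1))"
    and "g0 = - (axis last_idx 1 \<bullet> (matrix_inv A *v b0))"
    and "g1 \<noteq> 0"
    and "\<And>z. P1 z = \<eta> * g1 * ki * z^2 + (g0 - r) * \<eta> * z - gn * kp * \<mu> * r"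
    and "\<And>z. P2 z = - \<eta> * gn * kp * r * z^2 + (g0 - r) * \<eta> * z + g1 * ki * \<mu>"
    and "\<And>x z1 z2. equil x z1 z2 \<longleftrightarrow>
           (A *v x + (ki * z1) *\<^sub>R axis first_idx 1 - (kp * x $ last_idx * z2) *\<^sub>R axis last_idx 1 + b0 = 0
            \<and> \<mu> - \<eta> * z1 * z2 = 0
            \<and> \<theta> * x $ last_idx - \<eta> * z1 * z2 = 0)"
  shows "(\<exists>!z. z > 0 \<and> P1 z = 0)
    \<and> (\<exists>!p. case p of (x, z1, z2) \<Rightarrow> equil x z1 z2 \<and> z1 > 0)
    \<and> (\<forall>x z1 z2. equil x z1 z2 \<and> z1 > 0 \<longrightarrow>
          P1 z1 = 0 \<and> x $ last_idx = r \<and> z2 = \<mu> / (\<eta> * z1)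
          \<and> x = - (matrix_inv A *v ((ki * z1) *\<^sub>R axis first_idx 1
                   - (kp * r * \<mu> / (\<eta> * z1)) *\<^sub>R axis last_idx 1 + b0)))
    \<and> (\<exists>!z. z > 0 \<and> P2 z = 0)
    \<and> (\<forall>x z1 z2. equil x z1 z2 \<and> z1 > 0 \<longrightarrow>
          z2 > 0 \<and> P2 z2 = 0 \<and> z1 = \<mu> / (\<eta> * z2))"
proof -
  have "invertible A"
    using hurwitz_invertible[OF assms(2)] .
  have "\<forall>i. 0 \<le> axis first_idx (1::real) $ i"
    by (simp add: axis_def)
  then have "0 < g1"
    using metzler_hurwitz_inverse_nonpos[OF assms(1,2)] assms(10,13)
    by (simp add: inner_axis_left less_le)
  have "0 < gn"
    using metzler_hurwitz_inverse_diag_neg[OF assms(1,2), of last_idx] assms(11)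
    by (simp add: inner_axis_left)
  show ?thesis
    by (rule closed_loop_unique_equilibrium[OF \<open>invertible A\<close> assms(4-10) \<open>0 < g1\<close>
          assms(11) \<open>0 < gn\<close> assms(12,14-16)])
qed

end
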